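(* Let $X$ be a geodesic $\delta$--hyperbolic space ($\delta\geqslant0$), $x_0\in X$, and let $u_1,u_2,v,w_1,w_2$ be isometries of $X$ with $u_1vw_1=u_2vw_2$ such that the products $u_1v$, $u_2v$, $vw_1$ and $vw_2$ are reduced at $x_0$. Assume $|vx_0-x_0|>26\delta$, $|u_1x_0-u_2x_0|\leqslant|vx_0-x_0|$ and $|u_1x_0-x_0|\leqslant|u_2x_0-x_0|$. Then $x_0$ and $vx_0$ are in $C_{u_1^{-1}u_2}^{+190\delta}$. Moreover, $(x_0,u_2x_0)_{u_1x_0}\leqslant 24\delta$, $(u_1x_0,u_1vx_0)_{u_2x_0}\leqslant 66\delta$ and $(u_2x_0,u_2vx_0)_{u_1vx_0}\leqslant 138\delta$.
   Context: Distance $|x-y|$; Gromov product $(p,q)_x:=\frac12(|p-x|+|q-x|-|p-q|)$; $X$ is $\delta$--hyperbolic if $(p,r)_x\geqslant\min\{(p,q)_x,(q,r)_x\}-\delta$ for all $p,q,r,x$. The product $uv$ of two isometries is reduced at $x_0$ if $(u^{-1}x_0,vx_0)_{x_0}\leqslant\delta$. For an isometry $g$, $[g]:=\inf_x|gx-x|$ and $C_g:=\{x\in X\mid|gx-x|\leqslant[g]+8\delta\}$; $A^{+a}:=\{x\mid d(x,A)\leqslant a\}$. *)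

theory Defs
  imports "HOL-Analysis.Analysis"
begin

definition gromov_product :: "'a::metric_space \<Rightarrow> 'a \<Rightarrow> 'a \<Rightarrow> real" where
  "gromov_product p q x = (dist p x + dist q x - dist p q) / 2"

definition hyperbolic :: "real \<Rightarrow> ('a::metric_space) itself \<Rightarrow> bool" where
  "hyperbolic \<delta> _ \<longleftrightarrow> (\<forall>p q r x::'a.
      gromov_product p r x \<ge> min (gromov_product p q x) (gromov_product q r x) - \<delta>)"

definition geodesic_space :: "('a::metric_space) itself \<Rightarrow> bool" where
  "geodesic_space _ \<longleftrightarrow> (\<forall>x y::'a. \<exists>\<gamma>::real \<Rightarrow> 'a.
      \<gamma> 0 = x \<and> \<gamma> (dist x y) = y \<and>
      (\<forall>s\<in>{0..dist x y}. \<forall>t\<in>{0..dist x y}. dist (\<gamma> s) (\<gamma> t) = \<bar>s - t\<bar>))"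

definition isometry :: "('a::metric_space \<Rightarrow> 'a) \<Rightarrow> bool" where
  "isometry g \<longleftrightarrow> bij g \<and> (\<forall>x y. dist (g x) (g y) = dist x y)"

definition reduced_at :: "real \<Rightarrow> ('a::metric_space \<Rightarrow> 'a) \<Rightarrow> ('a \<Rightarrow> 'a) \<Rightarrow> 'a \<Rightarrow> bool" where
  "reduced_at \<delta> u v x0 \<longleftrightarrow> gromov_product (inv u x0) (v x0) x0 \<le> \<delta>"

definition transl_len :: "('a::metric_space \<Rightarrow> 'a) \<Rightarrow> real" where
  "transl_len g = (INF x. dist (g x) x)"

definition char_set :: "real \<Rightarrow> ('a::metric_space \<Rightarrow> 'a) \<Rightarrow> 'a set" where
  "char_set \<delta> g = {x. dist (g x) x \<le> transl_len g + 8 * \<delta>}"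

text \<open>A^{+a} = {x | d(x,A) \<le> a}; d(x,{}) is +infinity by convention.\<close>
definition nbhd :: "'a::metric_space set \<Rightarrow> real \<Rightarrow> 'a set" where
  "nbhd A a = {x. A \<noteq> {} \<and> infdist x A \<le> a}"

end

theory Submission
  imports Defs
begin

text \<open>
  Write \<open>z = u\<^sub>1 v w\<^sub>1 x\<^sub>0 = u\<^sub>2 v w\<^sub>2 x\<^sub>0\<close>. The reduced products make
  \<open>x\<^sub>0, u\<^sub>i x\<^sub>0, u\<^sub>i v x\<^sub>0, z\<close> two broken geodesics with \<open>\<delta>\<close>-reduced corners and long middle
  segments, so all four corners lie \<open>2\<delta>\<close>-close to a geodesic from \<open>x\<^sub>0\<close> to \<open>z\<close>. Along it,
  the distance between two corners is the difference of their distances from \<open>x\<^sub>0\<close> up to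
  \<open>10\<delta>\<close>, and the three Gromov product bounds become linear arithmetic.

  The isometry \<open>h = u\<^sub>2 u\<^sub>1\<^sup>-\<^sup>1\<close> maps the middle segment \<open>[u\<^sub>1 x\<^sub>0, u\<^sub>1 v x\<^sub>0]\<close> onto
  \<open>[u\<^sub>2 x\<^sub>0, u\<^sub>2 v x\<^sub>0]\<close>, which bounds its turn \<open>(p, h\<^sup>2 p)\<^sub>h\<^sub>p\<close> at both endpoints; conjugating by
  \<open>u\<^sub>1\<close>, these are the turns of \<open>g = u\<^sub>1\<^sup>-\<^sup>1 u\<^sub>2\<close> at \<open>x\<^sub>0\<close> and \<open>v x\<^sub>0\<close>. A turn
  \<open>(x, g\<^sup>2 x)\<^sub>g\<^sub>x \<le> \<alpha>\<close> makes the orbit of \<open>x\<close> a quasi-geodesic, so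
  \<open>[g] \<ge> |gx - x| - 2\<alpha> - 2\<delta>\<close>; the midpoint of a suitable segment \<open>[a, ga]\<close> next to \<open>x\<close>
  then lies in \<open>C\<^sub>g\<close> within distance \<open>\<alpha> + 3\<delta>\<close> of \<open>x\<close>.

  The argument only needs \<open>|vx\<^sub>0 - x\<^sub>0| > 3\<delta>\<close> and gives the sharper constants
  \<open>5\<delta>, 10\<delta>, 12\<delta>\<close> and \<open>43\<delta>\<close>.
\<close>

lemma gromov_product_commute: "gromov_product p q x = gromov_product q p x"
  unfolding gromov_product_def by (simp add: dist_commute)

lemma gromov_product_eq_halves:
  "gromov_product p q x = dist p x / 2 + dist q x / 2 - dist p q / 2"
  unfolding gromov_product_def by (simp add: field_simps)

lemma gromov_product_nonneg: "0 \<le> gromov_product p q x"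
  using dist_triangle[of p q x] by (simp add: gromov_product_eq_halves dist_commute)

lemma gromov_product_le_dist: "gromov_product p q x \<le> dist p x"
  using dist_triangle[of q x p] by (simp add: gromov_product_eq_halves dist_commute)

lemma gromov_product_add_eq_dist: "gromov_product y z x + gromov_product x z y = dist x y"
  by (simp add: gromov_product_eq_halves dist_commute)

lemma gromov_product_isometric:
  assumes "\<And>a b. dist (g a) (g b) = dist a b"
  shows "gromov_product (g p) (g q) (g x) = gromov_product p q x"
  by (simp add: gromov_product_def assms)

lemma hyperbolic_min_le:
  fixes p q r x :: "'a::metric_space"
  assumes "hyperbolic \<delta> TYPE('a)"
  shows "min (gromov_product p q x) (gromov_product q r x) \<le> gromov_product p r x + \<delta>"
  using assms unfolding hyperbolic_def by (simp add: diff_le_eq)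

lemma hyperbolic_nonneg:
  assumes "hyperbolic \<delta> TYPE('a::metric_space)"
  shows "0 \<le> \<delta>"
  using hyperbolic_min_le[OF assms, of "undefined :: 'a" undefined undefined undefined]
  by (simp add: gromov_product_def)

lemma isometry_dist: "isometry g \<Longrightarrow> dist (g x) (g y) = dist x y"
  unfolding isometry_def by blast

lemma isometry_f_inv_f: "isometry g \<Longrightarrow> g (inv g y) = y"
  unfolding isometry_def by (simp add: bij_is_surj surj_f_inv_f)

lemma isometry_inv_f_f: "isometry g \<Longrightarrow> inv g (g x) = x"
  unfolding isometry_def by (simp add: bij_is_inj)

lemma isometry_id: "isometry id"
  unfolding isometry_def by simp

lemma isometry_comp: "isometry f \<Longrightarrow> isometry g \<Longrightarrow> isometry (f \<circ> g)"
  unfolding isometry_def by (simp add: bij_comp)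

lemma isometry_inv: "isometry g \<Longrightarrow> isometry (inv g)"
  unfolding isometry_def by (metis bij_imp_bij_inv bij_is_surj surj_f_inv_f)

lemma reduced_at_image:
  assumes "isometry u" "isometry v" "reduced_at \<delta> v w x"
  shows "gromov_product (u x) (u (v (w x))) (u (v x)) \<le> \<delta>"
proof -
  have "gromov_product (u x) (u (v (w x))) (u (v x)) = gromov_product (inv v x) (w x) x"
    using gromov_product_isometric[of "u \<circ> v" "inv v x" "w x" x]
    by (simp add: assms(1,2) isometry_dist isometry_f_inv_f)
  then show ?thesis using assms(3) unfolding reduced_at_def by simp
qed

subsection \<open>Two reduced broken geodesics with a common endpoint\<close>

lemma reduced_corners_near_segment:
  fixes a p q z :: "'a::metric_space"
  assumes hyp: "hyperbolic \<delta> TYPE('a)"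
    and "gromov_product a q p \<le> \<delta>" "gromov_product p z q \<le> \<delta>" "3 * \<delta> < dist p q"
  shows "gromov_product a z p \<le> 2 * \<delta>" "gromov_product a z q \<le> 2 * \<delta>"
  using hyperbolic_min_le[OF hyp, of a z p q] hyperbolic_min_le[OF hyp, of p a q z] assms(2-)
  by (simp_all only: gromov_product_eq_halves dist_commute; linarith)+

lemma dist_le_near_segment:
  fixes a z w w' :: "'a::metric_space"
  assumes hyp: "hyperbolic \<delta> TYPE('a)"
    and "gromov_product a z w \<le> e" "gromov_product a z w' \<le> e"
  shows "dist w w' \<le> \<bar>dist a w - dist a w'\<bar> + 4 * e + 2 * \<delta>"
  using hyperbolic_min_le[OF hyp, of a w' w z] assms(2-) dist_triangle[of a z w]
  by (simp only: gromov_product_eq_halves dist_commute; linarith)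

locale reduced_paths =
  fixes \<delta> :: real and a p1 q1 p2 q2 z :: "'a::metric_space"
  assumes hyperbolic: "hyperbolic \<delta> TYPE('a)"
    and corner1: "gromov_product a q1 p1 \<le> \<delta>" "gromov_product p1 z q1 \<le> \<delta>"
    and corner2: "gromov_product a q2 p2 \<le> \<delta>" "gromov_product p2 z q2 \<le> \<delta>"
    and same_length: "dist p1 q1 = dist p2 q2"
    and long: "3 * \<delta> < dist p1 q1"
    and start_close: "dist p1 p2 \<le> dist p1 q1"
    and start_order: "dist a p1 \<le> dist a p2"
begin

lemma near_segment:
  "gromov_product a z p1 \<le> 2 * \<delta>" "gromov_product a z q1 \<le> 2 * \<delta>"
  "gromov_product a z p2 \<le> 2 * \<delta>" "gromov_product a z q2 \<le> 2 * \<delta>"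
  using reduced_corners_near_segment[OF hyperbolic corner1 long]
    reduced_corners_near_segment[OF hyperbolic corner2 long[unfolded same_length]] by simp_all

lemma aligned:
  "dist p1 p2 \<le> \<bar>dist a p1 - dist a p2\<bar> + 10 * \<delta>"
  "dist p2 q1 \<le> \<bar>dist a p2 - dist a q1\<bar> + 10 * \<delta>"
  "dist q1 q2 \<le> \<bar>dist a q1 - dist a q2\<bar> + 10 * \<delta>"
  using dist_le_near_segment[OF hyperbolic near_segment(1,3)]
    dist_le_near_segment[OF hyperbolic near_segment(3,2)]
    dist_le_near_segment[OF hyperbolic near_segment(2,4)] by simp_all

lemma delta_nonneg: "0 \<le> \<delta>"
  using hyperbolic_nonneg[OF hyperbolic] .

lemmas configuration =
  aligned start_order start_close same_length corner1 corner2 delta_nonneg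
  dist_triangle[of a q1 p1] dist_triangle[of a p2 p1] dist_triangle[of a q2 p2]
  dist_triangle[of a q2 p1]

lemma gromov_product_bounds:
  "gromov_product a p2 p1 \<le> 5 * \<delta>"
  "gromov_product p1 q1 p2 \<le> 10 * \<delta>"
  "gromov_product p2 q2 q1 \<le> 12 * \<delta>"
  using configuration by (simp_all only: gromov_product_eq_halves dist_commute; linarith)+

lemma turn_bounds:
  assumes iso: "\<And>x y. dist (h x) (h y) = dist x y" and h: "h p1 = p2" "h q1 = q2"
  shows "gromov_product p1 (h (h p1)) (h p1) \<le> 17 * \<delta>"
    and "gromov_product q1 (h (h q1)) (h q1) \<le> 40 * \<delta>"
proof -
  have transport: "gromov_product (h p2) q2 p2 = gromov_product p2 q1 p1"
    "gromov_product p2 (h q2) q2 = gromov_product p1 q2 q1"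
    using gromov_product_isometric[OF iso, of p2 q1 p1] gromov_product_isometric[OF iso, of p1 q2 q1]
    by (simp_all add: h)
  have estimates: "gromov_product p1 q2 p2 \<le> 6 * \<delta>"
    "dist p1 p2 - gromov_product p2 q1 p1 \<le> 10 * \<delta>"
    "gromov_product p1 q2 q1 \<le> 8 * \<delta>"
    "dist q1 q2 / 2 + dist p1 p2 / 2 - gromov_product p2 q1 q2 \<le> 11 * \<delta>"
    using configuration by (simp_all only: gromov_product_eq_halves dist_commute; linarith)+
  show "gromov_product p1 (h (h p1)) (h p1) \<le> 17 * \<delta>"
    using hyperbolic_min_le[OF hyperbolic, of p1 "h p2" p2 q2]
      gromov_product_le_dist[of p1 "h p2" p2] transport estimates delta_nonneg
    unfolding h by linarith
  show "gromov_product q1 (h (h q1)) (h q1) \<le> 40 * \<delta>"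
    using hyperbolic_min_le[OF hyperbolic, of p2 q1 q2 "h q2"]
      gromov_product_le_dist[of q1 "h q2" q2] zero_le_dist[of p1 p2] transport estimates delta_nonneg
    unfolding h by linarith
qed

end

subsection \<open>Translation length and turns\<close>

lemma transl_len_le: "transl_len g \<le> dist (g x) x"
  unfolding transl_len_def by (rule cINF_lower) (auto intro: bdd_belowI2[where m = 0])

lemma transl_len_geI: "(\<And>x. c \<le> dist (g x) x) \<Longrightarrow> c \<le> transl_len g"
  unfolding transl_len_def by (rule cINF_greatest) auto

lemma transl_len_nonneg: "0 \<le> transl_len g"
  by (rule transl_len_geI) simp

lemma dist_funpow_isometric:
  fixes g :: "'a::metric_space \<Rightarrow> 'a"
  assumes "\<And>x y. dist (g x) (g y) = dist x y"
  shows "dist ((g ^^ n) x) ((g ^^ n) y) = dist x y"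
  by (induction n) (auto simp: assms)

lemma dist_funpow_step:
  fixes g :: "'a::metric_space \<Rightarrow> 'a"
  assumes "\<And>x y. dist (g x) (g y) = dist x y"
  shows "dist ((g ^^ Suc n) x) ((g ^^ n) x) = dist (g x) x"
  using dist_funpow_isometric[OF assms, of n "g x" x] by (simp add: funpow_swap1)

lemma dist_funpow_le:
  fixes g :: "'a::metric_space \<Rightarrow> 'a"
  assumes "\<And>x y. dist (g x) (g y) = dist x y"
  shows "dist ((g ^^ n) x) x \<le> real n * dist (g x) x"
proof (induction n)
  case (Suc n)
  then show ?case
    using dist_triangle[of "(g ^^ Suc n) x" x "(g ^^ n) x"] dist_funpow_step[OF assms, of n x]
    by (simp add: algebra_simps)
qed simp

lemma transl_len_ge_of_orbit_growth:
  fixes g :: "'a::metric_space \<Rightarrow> 'a"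
  assumes iso: "\<And>x y. dist (g x) (g y) = dist x y"
    and growth: "\<And>n. real n * c \<le> dist x ((g ^^ n) x)"
  shows "c \<le> transl_len g"
proof (rule transl_len_geI)
  fix y
  have bound: "real n * (c - dist (g y) y) \<le> 2 * dist x y" for n
    using growth[of n] dist_funpow_le[OF iso, of n y] dist_funpow_isometric[OF iso, of n y x]
      dist_triangle[of x "(g ^^ n) x" y] dist_triangle[of y "(g ^^ n) x" "(g ^^ n) y"]
    by (simp add: dist_commute algebra_simps)
  show "c \<le> dist (g y) y"
  proof (rule ccontr)
    assume "\<not> c \<le> dist (g y) y"
    then obtain n where "2 * dist x y < real n * (c - dist (g y) y)"
      using reals_Archimedean3[of "c - dist (g y) y"] by auto
    with bound[of n] show False by linarith
  qed
qed

lemma orbit_gromov_product_le: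
  fixes g :: "'a::metric_space \<Rightarrow> 'a"
  assumes hyp: "hyperbolic \<delta> TYPE('a)" and iso: "\<And>x y. dist (g x) (g y) = dist x y"
    and turn: "gromov_product x (g (g x)) (g x) \<le> \<alpha>"
    and far: "2 * \<alpha> + 2 * \<delta> < dist (g x) x"
  shows "gromov_product x ((g ^^ Suc n) x) ((g ^^ n) x) \<le> \<alpha> + \<delta>"
proof (induction n)
  case 0
  show ?case
    using turn gromov_product_nonneg[of x "g (g x)" "g x"] hyperbolic_nonneg[OF hyp]
    by (simp add: gromov_product_def dist_commute)
next
  case (Suc n)
  define y where "y = (g ^^ n) x"
  have "gromov_product y ((g ^^ Suc (Suc n)) x) ((g ^^ Suc n) x) = gromov_product x (g (g x)) (g x)"
    using gromov_product_isometric[of "g ^^ n", OF dist_funpow_isometric[OF iso]]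
    by (simp add: y_def funpow_swap1)
  moreover have "gromov_product y x ((g ^^ Suc n) x) + gromov_product x ((g ^^ Suc n) x) y = dist (g x) x"
    using gromov_product_add_eq_dist[of "(g ^^ Suc n) x" x y] dist_funpow_step[OF iso, of n x]
    by (simp add: y_def gromov_product_commute dist_commute)
  (* By induction \<open>(y, x)\<^sub>w = |gx - x| - (x, w)\<^sub>y\<close> is large, where \<open>w = g\<^sup>n\<^sup>+\<^sup>1 x\<close>, so
     hyperbolicity passes the small turn \<open>(y, g w)\<^sub>w\<close> on to \<open>(x, g w)\<^sub>w\<close>. *)
  ultimately show ?case
    using Suc hyperbolic_min_le[OF hyp, of y x "(g ^^ Suc n) x" "(g ^^ Suc (Suc n)) x"] turn far
    unfolding y_def by linarith
qed

lemma orbit_dist_ge: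
  fixes g :: "'a::metric_space \<Rightarrow> 'a"
  assumes iso: "\<And>x y. dist (g x) (g y) = dist x y"
    and turns: "\<And>n. gromov_product x ((g ^^ Suc n) x) ((g ^^ n) x) \<le> \<beta>"
  shows "real n * (dist (g x) x - 2 * \<beta>) \<le> dist x ((g ^^ n) x)"
proof (induction n)
  case (Suc n)
  then show ?case
    using turns[of n] dist_funpow_step[OF iso, of n x]
    by (simp add: gromov_product_eq_halves dist_commute algebra_simps)
qed simp

lemma transl_len_ge_of_turn:
  fixes g :: "'a::metric_space \<Rightarrow> 'a"
  assumes hyp: "hyperbolic \<delta> TYPE('a)" and iso: "\<And>x y. dist (g x) (g y) = dist x y"
    and turn: "gromov_product x (g (g x)) (g x) \<le> \<alpha>"
    and far: "2 * \<alpha> + 2 * \<delta> < dist (g x) x"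
  shows "dist (g x) x - 2 * \<alpha> - 2 * \<delta> \<le> transl_len g"
  using transl_len_ge_of_orbit_growth[OF iso orbit_dist_ge[OF iso orbit_gromov_product_le[OF assms]]]
  by (simp add: algebra_simps)

lemma gromov_product_turn_conj:
  assumes "isometry u" "u \<circ> g = h \<circ> u"
  shows "gromov_product x (g (g x)) (g x) = gromov_product (u x) (h (h (u x))) (h (u x))"
  using gromov_product_isometric[of u x "g (g x)" "g x"] assms
  by (simp add: isometry_dist fun_eq_iff)

subsection \<open>Closeness to the characteristic set\<close>

lemma geodesic_midpoint:
  fixes x y :: "'a::metric_space"
  assumes "geodesic_space TYPE('a)"
  obtains m where "dist x m = dist x y / 2" "dist m y = dist x y / 2"
proof -
  obtain \<gamma> :: "real \<Rightarrow> 'a" where \<gamma>: "\<gamma> 0 = x" "\<gamma> (dist x y) = y"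
    and geod: "\<forall>s\<in>{0..dist x y}. \<forall>t\<in>{0..dist x y}. dist (\<gamma> s) (\<gamma> t) = \<bar>s - t\<bar>"
    using assms unfolding geodesic_space_def by blast
  have "dist (\<gamma> 0) (\<gamma> (dist x y / 2)) = dist x y / 2"
    "dist (\<gamma> (dist x y / 2)) (\<gamma> (dist x y)) = dist x y / 2"
    using geod by auto
  with that show ?thesis unfolding \<gamma> .
qed

lemma dist_midpoint_le:
  fixes a m x y :: "'a::metric_space"
  assumes hyp: "hyperbolic \<delta> TYPE('a)"
    and "dist a m = dist a y / 2" "dist m y = dist a y / 2"
  shows "dist x m \<le> max (dist x a) (dist x y) - dist a y / 2 + 2 * \<delta>"
  using hyperbolic_min_le[OF hyp, of a x m y] assms(2,3)
  by (simp only: gromov_product_eq_halves dist_commute; linarith)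

lemma midpoint_mem_char_set:
  fixes g :: "'a::metric_space \<Rightarrow> 'a"
  assumes hyp: "hyperbolic \<delta> TYPE('a)" and iso: "\<And>x y. dist (g x) (g y) = dist x y"
    and mid: "dist a m = dist a (g a) / 2" "dist m (g a) = dist a (g a) / 2"
  shows "m \<in> char_set \<delta> g"
proof (cases "dist (g m) m \<le> 8 * \<delta>")
  case True
  then show ?thesis using transl_len_nonneg[of g] unfolding char_set_def by auto
next
  case False
  note dists = hyperbolic_nonneg[OF hyp] mid
    iso[of m a] iso[of m "g a"] iso[of a "g a"] iso[of "g m" "g a"] iso[of "g m" m]
  (* \<open>g m\<close> is the midpoint of \<open>[g a, g\<^sup>2 a]\<close>, while \<open>(g a, m)\<^sub>g\<^sub>m\<close> and
     \<open>(g\<^sup>2 m, g\<^sup>2 a)\<^sub>g\<^sub>m\<close> both equal \<open>|gm - m| / 2\<close>, which is large. *)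
  have "gromov_product m (g (g a)) (g m) \<le> \<delta>"
    using hyperbolic_min_le[OF hyp, of "g a" m "g m" "g (g a)"] dists False
    by (simp only: gromov_product_eq_halves dist_commute; linarith)
  then have turn: "gromov_product m (g (g m)) (g m) \<le> 2 * \<delta>"
    using hyperbolic_min_le[OF hyp, of m "g (g m)" "g m" "g (g a)"] dists False
    by (simp only: gromov_product_eq_halves dist_commute; linarith)
  have "dist (g m) m - 2 * (2 * \<delta>) - 2 * \<delta> \<le> transl_len g"
    using transl_len_ge_of_turn[OF hyp iso turn] False hyperbolic_nonneg[OF hyp] by linarith
  then show ?thesis using hyperbolic_nonneg[OF hyp] unfolding char_set_def by simp
qed

lemma mem_nbhd_char_set:
  fixes g :: "'a::metric_space \<Rightarrow> 'a"
  assumes hyp: "hyperbolic \<delta> TYPE('a)" and geo: "geodesic_space TYPE('a)" and "isometry g"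
    and turn: "gromov_product x (g (g x)) (g x) \<le> \<alpha>"
  shows "x \<in> nbhd (char_set \<delta> g) (\<alpha> + 3 * \<delta>)"
proof -
  have iso: "\<And>x y. dist (g x) (g y) = dist x y" using \<open>isometry g\<close> by (rule isometry_dist)
  (* With \<open>y\<close> the midpoint of \<open>[x, gx]\<close> and \<open>y = g a\<close>, both \<open>a\<close> and \<open>ga\<close> are at
     distance \<open>|gx - x| / 2\<close> from \<open>x\<close>, and \<open>|ga - a|\<close> is nearly \<open>|gx - x|\<close>; so the
     midpoint of \<open>[a, ga]\<close>, which lies in \<open>C\<^sub>g\<close>, is close to \<open>x\<close>. *)
  obtain y where y: "dist x y = dist x (g x) / 2" "dist y (g x) = dist x (g x) / 2"
    using geodesic_midpoint[OF geo] .
  define a where "a = inv g y"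
  have ga: "g a = y" unfolding a_def using \<open>isometry g\<close> by (rule isometry_f_inv_f)
  obtain m where m: "dist a m = dist a (g a) / 2" "dist m (g a) = dist a (g a) / 2"
    using geodesic_midpoint[OF geo] .
  have "dist x a = dist x (g x) / 2" using iso[of a x] ga y by (simp add: dist_commute)
  then have close: "dist x m \<le> dist x (g x) / 2 - dist a (g a) / 2 + 2 * \<delta>"
    using dist_midpoint_le[OF hyp m, of x] ga y by simp
  have "dist (g x) x - 2 * \<alpha> - 2 * \<delta> \<le> dist (g a) a"
  proof (cases "2 * \<alpha> + 2 * \<delta> < dist (g x) x")
    case True
    then show ?thesis using transl_len_ge_of_turn[OF hyp iso turn True] transl_len_le[of g a] by linarith
  next
    case False
    then show ?thesis using zero_le_dist[of "g a" a] by linarith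
  qed
  with close have "dist x m \<le> \<alpha> + 3 * \<delta>" by (simp add: dist_commute)
  moreover have "m \<in> char_set \<delta> g" using midpoint_mem_char_set[OF hyp iso m] .
  ultimately show ?thesis unfolding nbhd_def using infdist_le[of m _ x] by force
qed

lemma nbhd_mono: "r \<le> s \<Longrightarrow> nbhd A r \<subseteq> nbhd A s"
  unfolding nbhd_def by auto

lemma reduced_products_paths:
  fixes x0 :: "'a::metric_space" and u1 u2 v w1 w2 :: "'a \<Rightarrow> 'a"
  assumes "hyperbolic \<delta> TYPE('a)"
    and iso: "isometry u1" "isometry u2" "isometry v"
    and "u1 \<circ> v \<circ> w1 = u2 \<circ> v \<circ> w2"
    and red: "reduced_at \<delta> u1 v x0" "reduced_at \<delta> u2 v x0"
      "reduced_at \<delta> v w1 x0" "reduced_at \<delta> v w2 x0"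
    and "3 * \<delta> < dist (v x0) x0"
    and "dist (u1 x0) (u2 x0) \<le> dist (v x0) x0"
    and "dist (u1 x0) x0 \<le> dist (u2 x0) x0"
  shows "reduced_paths \<delta> x0 (u1 x0) (u1 (v x0)) (u2 x0) (u2 (v x0)) (u1 (v (w1 x0)))"
proof
  have "u1 (v (w1 x0)) = u2 (v (w2 x0))"
    using fun_cong[OF \<open>u1 \<circ> v \<circ> w1 = u2 \<circ> v \<circ> w2\<close>] by simp
  then show "gromov_product (u1 x0) (u1 (v (w1 x0))) (u1 (v x0)) \<le> \<delta>"
    and "gromov_product (u2 x0) (u1 (v (w1 x0))) (u2 (v x0)) \<le> \<delta>"
    using reduced_at_image[OF iso(1,3) red(3)] reduced_at_image[OF iso(2,3) red(4)] by simp_all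
  show "gromov_product x0 (u1 (v x0)) (u1 x0) \<le> \<delta>"
    and "gromov_product x0 (u2 (v x0)) (u2 x0) \<le> \<delta>"
    using reduced_at_image[OF isometry_id iso(1) red(1)]
      reduced_at_image[OF isometry_id iso(2) red(2)] by simp_all
qed (use assms in \<open>simp_all add: isometry_dist dist_commute\<close>)

lemma reduced_products_turns:
  fixes a b :: "'a::metric_space" and u1 u2 :: "'a \<Rightarrow> 'a"
  assumes "isometry u1" "isometry u2"
    and paths: "reduced_paths \<delta> a (u1 a) (u1 b) (u2 a) (u2 b) z"
  shows "gromov_product a ((inv u1 \<circ> u2) ((inv u1 \<circ> u2) a)) ((inv u1 \<circ> u2) a) \<le> 17 * \<delta>"
    and "gromov_product b ((inv u1 \<circ> u2) ((inv u1 \<circ> u2) b)) ((inv u1 \<circ> u2) b) \<le> 40 * \<delta>"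
proof -
  define h where "h = u2 \<circ> inv u1"
  have "isometry h" using assms(1,2) by (simp add: h_def isometry_comp isometry_inv)
  have conj: "u1 \<circ> (inv u1 \<circ> u2) = h \<circ> u1"
    using assms(1) by (simp add: h_def fun_eq_iff isometry_f_inv_f isometry_inv_f_f)
  have "h (u1 a) = u2 a" "h (u1 b) = u2 b"
    using assms(1) by (simp_all add: h_def isometry_inv_f_f)
  from reduced_paths.turn_bounds[OF paths isometry_dist[OF \<open>isometry h\<close>] this]
  show "gromov_product a ((inv u1 \<circ> u2) ((inv u1 \<circ> u2) a)) ((inv u1 \<circ> u2) a) \<le> 17 * \<delta>"
    and "gromov_product b ((inv u1 \<circ> u2) ((inv u1 \<circ> u2) b)) ((inv u1 \<circ> u2) b) \<le> 40 * \<delta>"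
    unfolding gromov_product_turn_conj[OF assms(1) conj] .
qed

theorem proposition2p31:
  fixes \<delta> :: real and x0 :: "'a::metric_space"
    and u1 u2 v w1 w2 :: "'a \<Rightarrow> 'a"
  assumes "\<delta> \<ge> 0"
    and "geodesic_space TYPE('a)"
    and "hyperbolic \<delta> TYPE('a)"
    and "isometry u1" "isometry u2" "isometry v" "isometry w1" "isometry w2"
    and "u1 \<circ> v \<circ> w1 = u2 \<circ> v \<circ> w2"
    and "reduced_at \<delta> u1 v x0" "reduced_at \<delta> u2 v x0"
    and "reduced_at \<delta> v w1 x0" "reduced_at \<delta> v w2 x0"
    and "dist (v x0) x0 > 26 * \<delta>"
    and "dist (u1 x0) (u2 x0) \<le> dist (v x0) x0"
    and "dist (u1 x0) x0 \<le> dist (u2 x0) x0"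
  shows "x0 \<in> nbhd (char_set \<delta> (inv u1 \<circ> u2)) (190 * \<delta>) \<and>
         v x0 \<in> nbhd (char_set \<delta> (inv u1 \<circ> u2)) (190 * \<delta>) \<and>
         gromov_product x0 (u2 x0) (u1 x0) \<le> 24 * \<delta> \<and>
         gromov_product (u1 x0) (u1 (v x0)) (u2 x0) \<le> 66 * \<delta> \<and>
         gromov_product (u2 x0) (u2 (v x0)) (u1 (v x0)) \<le> 138 * \<delta>"
proof -
  have paths: "reduced_paths \<delta> x0 (u1 x0) (u1 (v x0)) (u2 x0) (u2 (v x0)) (u1 (v (w1 x0)))"
    using assms(1,14) by (intro reduced_products_paths[OF assms(3-6,9-13) _ assms(15,16)]) linarith
  have g: "isometry (inv u1 \<circ> u2)"
    using assms(4,5) by (simp add: isometry_comp isometry_inv)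
  note turns = reduced_products_turns[OF assms(4,5) paths]
  have "x0 \<in> nbhd (char_set \<delta> (inv u1 \<circ> u2)) (17 * \<delta> + 3 * \<delta>)"
    "v x0 \<in> nbhd (char_set \<delta> (inv u1 \<circ> u2)) (40 * \<delta> + 3 * \<delta>)"
    by (rule mem_nbhd_char_set[OF assms(3,2) g turns(1)],
        rule mem_nbhd_char_set[OF assms(3,2) g turns(2)])
  then have "x0 \<in> nbhd (char_set \<delta> (inv u1 \<circ> u2)) (190 * \<delta>)"
    "v x0 \<in> nbhd (char_set \<delta> (inv u1 \<circ> u2)) (190 * \<delta>)"
    using nbhd_mono[of "17 * \<delta> + 3 * \<delta>" "190 * \<delta>"]
      nbhd_mono[of "40 * \<delta> + 3 * \<delta>" "190 * \<delta>"] assms(1) by auto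
  then show ?thesis
    using reduced_paths.gromov_product_bounds[OF paths] assms(1)
    by (simp add: dist_commute gromov_product_commute)
qed

end
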